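(* Assume (H1) and (H2) of the standing setting. Let $w\in V$ and $f\in H$. Then for every $\lambda\ge C_{\theta_1,1/4}\|w\|_V^{\theta_1}$ there exists $u\in V$ such that $$\lambda(u,v-u)+a(u,v-u)+\langle B(w,u),v-u\rangle+\varphi(v)-\varphi(u)\ge (f,v-u)\qquad\forall v\in V. \tag{O}$$ In particular, $u\in D(\partial\varphi)$.
   Context: Standing setting. $V\subset H\subset V'$ is a Gelfand triple of real Hilbert spaces ($H$ identified with its dual), with continuous and dense embeddings, and the embedding $V\hookrightarrow H$ is compact. $(\cdot,\cdot)$ denotes the inner product of $H$ and $\langle\cdot,\cdot\rangle$ the duality pairing between $V'$ and $V$. $a:V\times V\to\mathbb R$ is a bounded bilinear form with $a(u,u)\ge\alpha\|u\|^2$ for some $\alpha>0$; the norm of $V$ is taken to be $\|u\|_V:=\sqrt{a(u,u)}$. $B:V\times V\to V'$ is a bilinear operator with $|\langle B(u,v),w\rangle|\le C_B\|u\|_V\|v\|_V\|w\|_V$ for all $u,v,w\in V$. $\varphi:V\to(-\infty,+\infty]$ is convex, proper and lower semicontinuous, $D(\varphi)=\{v:\varphi(v)<\infty\}$, and $\varphi(v)\ge-C_{\varphi1}(\|v\|_V+1)$ for all $v$ for some constant $C_{\varphi1}>0$; $\partial\varphi(u)=\{\xi\in V':\langle\xi,v-u\rangle\le\varphi(v)-\varphi(u)\ \forall v\in V\}$, $D(\partial\varphi)=\{u:\partial\varphi(u)\ne\emptyset\}$. (H1) There are $C>0$, $\beta_1\in(0,1]$ with $|\langle B(u,v),v\rangle|\le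 C\|u\|_V\|v\|_V\|v\|_H^{\beta_1}\|v\|_V^{1-\beta_1}$ for all $u,v\in V$. Set $\theta_1:=2/\beta_1$; by Young's inequality, for every $\epsilon>0$ there is a constant $C_{\theta_1,\epsilon}>0$ (fixed once and for all) with $|\langle B(u,v),v\rangle|\le C_{\theta_1,\epsilon}\|u\|_V^{\theta_1}\|v\|_H^2+\epsilon\|v\|_V^2$ for all $u,v\in V$. (H2) For each fixed $u\in V$: if $v_j\rightharpoonup v$ and $w_j\rightharpoonup w$ weakly in $V$, then $\langle B(u,v_j),w_j\rangle\to\langle B(u,v),w\rangle$. *)

theory Defs
  imports "HOL-Analysis.Analysis"
begin

definition convex_ereal_fun :: "('v::real_vector \<Rightarrow> ereal) \<Rightarrow> bool" where
  "convex_ereal_fun \<phi> \<longleftrightarrow>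
     (\<forall>x y t. 0 < t \<and> t < 1 \<longrightarrow>
        \<phi> ((1 - t) *\<^sub>R x + t *\<^sub>R y) \<le> ereal (1 - t) * \<phi> x + ereal t * \<phi> y)"

definition proper_fun :: "('v \<Rightarrow> ereal) \<Rightarrow> bool" where
  "proper_fun \<phi> \<longleftrightarrow> (\<forall>v. \<phi> v \<noteq> -\<infinity>) \<and> (\<exists>v. \<phi> v < \<infinity>)"

definition lsc_fun :: "('v::topological_space \<Rightarrow> ereal) \<Rightarrow> bool" where
  "lsc_fun \<phi> \<longleftrightarrow> (\<forall>c. closed {v. \<phi> v \<le> c})"

text \<open>Effective domain of the subdifferential: the subgradients are elements of V',
  i.e. continuous linear functionals on V; \<open>\<phi> u\<close> must be finite.\<close>
definition subdiff :: "('v::real_normed_vector \<Rightarrow> ereal) \<Rightarrow> 'v \<Rightarrow> ('v \<Rightarrow> real) set" where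
  "subdiff \<phi> u = {\<xi>. bounded_linear \<xi> \<and> \<phi> u < \<infinity> \<and>
                     (\<forall>v. ereal (\<xi> (v - u)) + \<phi> u \<le> \<phi> v)}"

definition dom_subdiff :: "('v::real_normed_vector \<Rightarrow> ereal) \<Rightarrow> 'v set" where
  "dom_subdiff \<phi> = {u. subdiff \<phi> u \<noteq> {}}"

definition weak_conv :: "(nat \<Rightarrow> 'v::real_inner) \<Rightarrow> 'v \<Rightarrow> bool" where
  "weak_conv x y \<longleftrightarrow> (\<forall>z. (\<lambda>j. inner z (x j)) \<longlonglongrightarrow> inner z y)"

end

theory Submission
  imports Defs
begin

text \<open>For fixed \<open>w\<close> problem (O) is linear in \<open>u\<close>: with
  \<open>c u z = \<lambda> (u, z)\<^sub>H + a u z + b w u z\<close> it reads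
  \<open>c u (v - u) - (f, v - u) + \<phi> v - \<phi> u \<ge> 0\<close>. The form \<open>c\<close> is bounded and
  coercive because Young's inequality with \<open>\<epsilon> = 1/4\<close> and the lower bound on \<open>\<lambda>\<close> give
  \<open>c u u \<ge> 3/4 a u u\<close>. So (O) is a Lions--Stampacchia variational inequality of the second
  kind. It is solved by Banach's fixed point theorem applied to \<open>u \<mapsto> P (u - \<rho> (A u - f))\<close>,
  where \<open>A\<close> is the Riesz representative of \<open>c\<close> and \<open>P\<close> the proximal map of \<open>\<rho> \<phi>\<close>; both
  come from minimising \<open>|v|\<^sup>2/2 + g v\<close> for convex lower semicontinuous \<open>g\<close>, whose
  minimising sequences are Cauchy by the parallelogram law. The solution \<open>u\<close> lies in
  \<open>D(\<partial>\<phi>)\<close> because (O) says precisely that \<open>f - c u\<close> is a subgradient at \<open>u\<close>.\<close>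

lemma closed_sublevels_tendsto_le:
  fixes g :: "'a::metric_space \<Rightarrow> real"
  assumes closed: "\<And>c. closed {v\<in>D. g v \<le> c}"
    and x: "\<And>n. x n \<in> D" "x \<longlonglongrightarrow> z"
    and s: "\<And>n. g (x n) \<le> s n" "s \<longlonglongrightarrow> c"
  shows "z \<in> D \<and> g z \<le> c"
proof -
  have z: "z \<in> {v\<in>D. g v \<le> c + e}" if "e > 0" for e
  proof (rule Lim_in_closed_set[OF closed _ _ x(2)])
    have "eventually (\<lambda>n. s n < c + e) sequentially"
      using order_tendstoD(2)[OF s(2)] that by simp
    then show "eventually (\<lambda>n. x n \<in> {v\<in>D. g v \<le> c + e}) sequentially"
      by eventually_elim (simp add: x(1) order_trans[OF s(1) less_imp_le])
  qed simp
  show ?thesis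
    using z[of 1] z by (auto intro: field_le_epsilon)
qed

lemma closed_sublevels_add_continuous:
  fixes g h :: "'a::metric_space \<Rightarrow> real"
  assumes closed: "\<And>c. closed {v\<in>D. g v \<le> c}" and h: "continuous_on UNIV h"
  shows "closed {v\<in>D. g v + h v \<le> c}"
  unfolding closed_sequential_limits
proof (intro allI impI, elim conjE)
  fix x z assume x: "\<forall>n. x n \<in> {v\<in>D. g v + h v \<le> c}" "x \<longlonglongrightarrow> z"
  have "(\<lambda>n. c - h (x n)) \<longlonglongrightarrow> c - h z"
    using continuous_on_tendsto_compose[OF h x(2)] by (intro tendsto_intros) auto
  moreover have "x n \<in> D" "g (x n) \<le> c - h (x n)" for n
    using spec[OF x(1), of n] by auto
  ultimately have "z \<in> D \<and> g z \<le> c - h z"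
    by (intro closed_sublevels_tendsto_le[OF closed _ x(2)])
  then show "z \<in> {v\<in>D. g v + h v \<le> c}"
    by simp
qed

lemma Cauchy_if_sq_dist_le:
  fixes x :: "nat \<Rightarrow> 'a::metric_space"
  assumes dist: "\<And>n k. (dist (x n) (x k))\<^sup>2 \<le> e n + e k" and e: "e \<longlonglongrightarrow> 0"
  shows "Cauchy x"
proof (rule metric_CauchyI)
  fix \<epsilon> :: real assume "\<epsilon> > 0"
  then obtain N where N: "\<And>n. n \<ge> N \<Longrightarrow> e n < \<epsilon>\<^sup>2 / 2"
    using order_tendstoD(2)[OF e, of "\<epsilon>\<^sup>2 / 2"] by (auto simp: eventually_sequentially)
  have "dist (x n) (x k) < \<epsilon>" if "n \<ge> N" "k \<ge> N" for n k
  proof -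
    have "(dist (x n) (x k))\<^sup>2 < \<epsilon>\<^sup>2"
      using dist[of n k] N[OF that(1)] N[OF that(2)] by linarith
    then show ?thesis
      using \<open>\<epsilon> > 0\<close> by (simp add: power_less_imp_less_base)
  qed
  then show "\<exists>M. \<forall>m\<ge>M. \<forall>n\<ge>M. dist (x m) (x n) < \<epsilon>" by blast
qed

lemma sq_dist_le_of_near_minimal:
  fixes g :: "'v::real_inner \<Rightarrow> real"
  assumes conv: "convex_on D g" and "x \<in> D" "y \<in> D"
    and m: "\<And>v. v \<in> D \<Longrightarrow> m \<le> (norm v)\<^sup>2 / 2 + g v"
  shows "(dist x y)\<^sup>2 \<le> 4 * ((norm x)\<^sup>2 / 2 + g x - m) + 4 * ((norm y)\<^sup>2 / 2 + g y - m)"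
proof -
  let ?z = "(1/2) *\<^sub>R x + (1/2) *\<^sub>R y"
  have "?z \<in> D"
    using convexD[OF convex_on_imp_convex[OF conv] assms(2,3)] by simp
  then have "m \<le> (norm ?z)\<^sup>2 / 2 + g ?z" by (rule m)
  moreover have "g ?z \<le> g x / 2 + g y / 2"
    using convex_onD[OF conv, of "1/2"] assms(2,3) by simp
  moreover have "(norm ?z)\<^sup>2 = (norm x)\<^sup>2 / 2 + (norm y)\<^sup>2 / 2 - (norm (x - y))\<^sup>2 / 4"
    unfolding power2_norm_eq_inner
    by (simp add: inner_add_left inner_add_right inner_diff_left inner_diff_right inner_commute field_simps)
  ultimately show ?thesis
    unfolding dist_norm by argo
qed

lemma half_sq_norm_plus_convex_attains_min:
  fixes g :: "'v::{real_inner,complete_space} \<Rightarrow> real"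
  assumes conv: "convex_on D g" and nonempty: "D \<noteq> {}"
    and closed: "\<And>c. closed {v\<in>D. g v \<le> c}"
    and minorant: "\<And>v. v \<in> D \<Longrightarrow> g v \<ge> - K * (norm v + 1)"
  shows "\<exists>z\<in>D. \<forall>v\<in>D. (norm z)\<^sup>2 / 2 + g z \<le> (norm v)\<^sup>2 / 2 + g v"
proof -
  define F where "F v = (norm v)\<^sup>2 / 2 + g v" for v
  have "F v \<ge> - K\<^sup>2 / 2 - K" if "v \<in> D" for v
  proof -
    have "0 \<le> (norm v - K)\<^sup>2" by simp
    then show ?thesis
      using minorant[OF that] unfolding F_def by (simp add: power2_eq_square algebra_simps)
  qed
  then have bdd: "bdd_below (F ` D)" by (meson bdd_belowI2)
  define m where "m = Inf (F ` D)"
  have m_le: "m \<le> F v" if "v \<in> D" for v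
    unfolding m_def using bdd that by (simp add: cInf_lower)
  have "\<exists>x\<in>D. F x < m + 1 / (real n + 1)" for n
    using cInf_lessD[of "F ` D" "m + 1 / (real n + 1)"] nonempty unfolding m_def by auto
  then obtain x where xD: "\<And>n. x n \<in> D" and xF: "\<And>n. F (x n) < m + 1 / (real n + 1)"
    by metis
  have parallelogram: "(dist (x n) (x k))\<^sup>2 \<le> 4 / (real n + 1) + 4 / (real k + 1)" for n k
    using sq_dist_le_of_near_minimal[OF conv xD xD, of m n k] m_le xF[of n] xF[of k]
    unfolding F_def by fastforce
  have inv: "(\<lambda>n. 1 / (real n + 1)) \<longlonglongrightarrow> 0"
    using LIMSEQ_inverse_real_of_nat by (simp add: inverse_eq_divide add.commute)
  then have "(\<lambda>n. 4 / (real n + 1)) \<longlonglongrightarrow> 0"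
    using tendsto_mult_right_zero[OF inv, of 4] by simp
  with parallelogram have "Cauchy x"
    by (rule Cauchy_if_sq_dist_le)
  then obtain z where lim: "x \<longlonglongrightarrow> z"
    using Cauchy_convergent_iff convergent_def by blast
  have "g (x n) \<le> (m - (norm (x n))\<^sup>2 / 2) + 1 / (real n + 1)" for n
    using xF[of n] unfolding F_def by simp
  moreover have "(\<lambda>n. (m - (norm (x n))\<^sup>2 / 2) + 1 / (real n + 1)) \<longlonglongrightarrow> (m - (norm z)\<^sup>2 / 2) + 0"
    by (intro tendsto_add inv) (auto intro!: tendsto_eq_intros lim)
  ultimately have "z \<in> D \<and> g z \<le> (m - (norm z)\<^sup>2 / 2) + 0"
    by (rule closed_sublevels_tendsto_le[OF closed xD lim])
  then show ?thesis
    using m_le unfolding F_def by force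
qed

lemma variational_ineq_of_minimizer:
  fixes g :: "'v::real_inner \<Rightarrow> real"
  assumes conv: "convex_on D g" and z: "z \<in> D" and v: "v \<in> D"
    and min: "\<And>v. v \<in> D \<Longrightarrow> (norm z)\<^sup>2 / 2 + g z \<le> (norm v)\<^sup>2 / 2 + g v"
  shows "inner z (v - z) + g v - g z \<ge> 0"
proof -
  define d where "d = v - z"
  define Q where "Q = inner z d + g v - g z"
  have "0 \<le> Q + t * ((norm d)\<^sup>2 / 2)" if t: "0 < t" "t < 1" for t
  proof -
    have eq: "(1 - t) *\<^sub>R z + t *\<^sub>R v = z + t *\<^sub>R d"
      unfolding d_def by (simp add: algebra_simps)
    have "z + t *\<^sub>R d \<in> D"
      using convex_on_imp_convex[OF conv] z v t unfolding eq[symmetric] convex_alt by auto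
    then have "(norm z)\<^sup>2 / 2 + g z \<le> (norm (z + t *\<^sub>R d))\<^sup>2 / 2 + g (z + t *\<^sub>R d)"
      by (rule min)
    moreover have "(norm (z + t *\<^sub>R d))\<^sup>2 = (norm z)\<^sup>2 + 2 * t * inner z d + t\<^sup>2 * (norm d)\<^sup>2"
      unfolding power2_norm_eq_inner
      by (simp add: inner_add_left inner_add_right inner_commute algebra_simps power2_eq_square)
    moreover have "g (z + t *\<^sub>R d) \<le> (1 - t) * g z + t * g v"
      using convex_onD[OF conv, of t z v] t z v unfolding eq by simp
    ultimately have "0 \<le> t * inner z d + t\<^sup>2 * (norm d)\<^sup>2 / 2 + ((1 - t) * g z + t * g v) - g z"
      by linarith
    also have "\<dots> = t * (Q + t * ((norm d)\<^sup>2 / 2))"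
      unfolding Q_def by (simp add: algebra_simps power2_eq_square)
    finally have "0 \<le> t * (Q + t * ((norm d)\<^sup>2 / 2))" .
    then show ?thesis
      using t by (simp add: zero_le_mult_iff)
  qed
  then have "eventually (\<lambda>t. 0 \<le> Q + t * ((norm d)\<^sup>2 / 2)) (at_right 0)"
    using eventually_at_right_real[of 0 1] by (auto elim: eventually_mono)
  moreover have "((\<lambda>t. Q + t * ((norm d)\<^sup>2 / 2)) \<longlongrightarrow> Q + 0 * ((norm d)\<^sup>2 / 2)) (at_right 0)"
    by (intro tendsto_intros)
  ultimately have "0 \<le> Q"
    using tendsto_lowerbound by fastforce
  then show ?thesis
    unfolding Q_def d_def .
qed

lemma half_sq_norm_plus_convex_variational_ineq:
  fixes g :: "'v::{real_inner,complete_space} \<Rightarrow> real"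
  assumes "convex_on D g" and "D \<noteq> {}"
    and "\<And>c. closed {v\<in>D. g v \<le> c}"
    and "\<And>v. v \<in> D \<Longrightarrow> g v \<ge> - K * (norm v + 1)"
  shows "\<exists>z\<in>D. \<forall>v\<in>D. inner z (v - z) + g v - g z \<ge> 0"
  using half_sq_norm_plus_convex_attains_min[OF assms] variational_ineq_of_minimizer[OF assms(1)]
  by blast

lemma riesz_representation:
  fixes l :: "'v::{real_inner,complete_space} \<Rightarrow> real"
  assumes "bounded_linear l"
  shows "\<exists>z. \<forall>y. inner z y = l y"
proof -
  interpret bounded_linear l by fact
  obtain K where K: "\<And>x. norm (l x) \<le> norm x * K" "K > 0"
    using pos_bounded by blast
  have "convex_on UNIV (\<lambda>v. - l v)"
    by (rule convex_onI) (simp_all add: add scale)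
  moreover have "closed {v\<in>UNIV. - l v \<le> c}" for c
    using linear_continuous_on[OF assms] by (auto intro!: closed_Collect_le continuous_intros)
  moreover have "- l v \<ge> - K * (norm v + 1)" for v
    using K(1)[of v] K(2) by (auto simp: abs_le_iff algebra_simps)
  ultimately obtain z where z: "\<And>v. inner z (v - z) - l v + l z \<ge> 0"
    using half_sq_norm_plus_convex_variational_ineq[where D = UNIV and g = "\<lambda>v. - l v" and K = K] by auto
  have "inner z y = l y" for y
    using z[of "z + y"] z[of "z - y"] by (simp add: add diff inner_diff_right)
  then show ?thesis by blast
qed

lemma exists_prox_point:
  fixes r :: "'v::{real_inner,complete_space} \<Rightarrow> real"
  assumes conv: "convex_on D r" and nonempty: "D \<noteq> {}"
    and closed: "\<And>c. closed {v\<in>D. r v \<le> c}"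
    and minorant: "\<And>v. v \<in> D \<Longrightarrow> r v \<ge> - K * (norm v + 1)"
    and \<rho>: "\<rho> > 0"
  shows "\<exists>z\<in>D. \<forall>v\<in>D. inner (z - p) (v - z) + \<rho> * (r v - r z) \<ge> 0"
proof -
  \<comment> \<open>\<open>|v - p|\<^sup>2/2 + \<rho> r v\<close> and \<open>|v|\<^sup>2/2 + g v\<close> differ by a constant.\<close>
  define g where "g v = \<rho> * r v - inner p v" for v
  have g_convex: "convex_on D g"
  proof (rule convex_onI)
    show "g ((1 - t) *\<^sub>R x + t *\<^sub>R y) \<le> (1 - t) * g x + t * g y"
      if "0 < t" "t < 1" "x \<in> D" "y \<in> D" for t x y
      using mult_left_mono[OF convex_onD[OF conv, of t x y] less_imp_le[OF \<rho>]] that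
      unfolding g_def by (simp add: inner_add_right algebra_simps)
  qed (rule convex_on_imp_convex[OF conv])
  have g_closed: "closed {v\<in>D. g v \<le> c}" for c
  proof -
    have "closed {v\<in>D. \<rho> * r v \<le> c}" for c
      using closed[of "c / \<rho>"] \<rho> by (simp add: field_simps)
    then have "closed {v\<in>D. \<rho> * r v + - inner p v \<le> c}"
      by (rule closed_sublevels_add_continuous) (intro continuous_intros)
    then show ?thesis
      unfolding g_def by simp
  qed
  have g_minorant: "g v \<ge> - (\<rho> * \<bar>K\<bar> + norm p) * (norm v + 1)" if "v \<in> D" for v
  proof -
    have "(\<rho> * K) * (norm v + 1) \<le> (\<rho> * \<bar>K\<bar>) * (norm v + 1)"
      using \<rho> by (intro mult_right_mono mult_left_mono) auto
    then have "\<rho> * r v \<ge> - (\<rho> * \<bar>K\<bar>) * (norm v + 1)"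
      using mult_left_mono[OF minorant[OF that] less_imp_le[OF \<rho>]] by (simp add: algebra_simps)
    moreover have "inner p v \<le> norm p * (norm v + 1)"
      using norm_cauchy_schwarz[of p v] norm_ge_zero[of p] unfolding distrib_left by linarith
    ultimately show ?thesis
      unfolding g_def by (simp add: algebra_simps)
  qed
  obtain z where "z \<in> D" "\<And>v. v \<in> D \<Longrightarrow> inner z (v - z) + g v - g z \<ge> 0"
    using half_sq_norm_plus_convex_variational_ineq[OF g_convex nonempty g_closed g_minorant] by blast
  then show ?thesis
    unfolding g_def by (intro bexI[of _ z]) (auto simp: inner_diff_left inner_diff_right algebra_simps)
qed

lemma prox_nonexpansive:
  fixes P :: "'v::real_inner \<Rightarrow> 'v"
  assumes PD: "\<And>p. P p \<in> D"
    and P: "\<And>p v. v \<in> D \<Longrightarrow> inner (P p - p) (v - P p) + \<rho> * (r v - r (P p)) \<ge> 0"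
  shows "norm (P p - P q) \<le> norm (p - q)"
proof -
  have "inner (P p - p) (P q - P p) + inner (P q - q) (P p - P q) \<ge> 0"
    using P[OF PD, of q p] P[OF PD, of p q] by (simp add: algebra_simps)
  moreover have "inner (P p - p) (P q - P p) + inner (P q - q) (P p - P q)
      = inner (p - q) (P p - P q) - (norm (P p - P q))\<^sup>2"
    unfolding power2_norm_eq_inner by (simp add: inner_diff_left inner_diff_right inner_commute)
  ultimately have "norm (P p - P q) * norm (P p - P q) \<le> norm (p - q) * norm (P p - P q)"
    using norm_cauchy_schwarz[of "p - q" "P p - P q"] by (simp add: power2_eq_square)
  then show ?thesis
    by (cases "P p = P q") (auto simp: mult_le_cancel_right)
qed

lemma norm_diff_scaled_le:
  fixes d e :: "'v::real_inner"
  assumes mono: "\<beta> * (norm e)\<^sup>2 \<le> inner d e" and bound: "norm d \<le> M * norm e"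
    and "0 < \<beta>" "\<beta> \<le> M"
  shows "norm (e - (\<beta> / M\<^sup>2) *\<^sub>R d) \<le> sqrt (1 - (\<beta> / M)\<^sup>2) * norm e"
proof -
  \<comment> \<open>This \<open>\<rho>\<close> minimises the squared contraction factor \<open>1 - 2 \<rho> \<beta> + \<rho>\<^sup>2 M\<^sup>2\<close>.\<close>
  define \<rho> where "\<rho> = \<beta> / M\<^sup>2"
  have "\<rho> \<ge> 0" unfolding \<rho>_def using assms by simp
  have "(norm (e - \<rho> *\<^sub>R d))\<^sup>2 = (norm e)\<^sup>2 - 2 * \<rho> * inner d e + \<rho>\<^sup>2 * (norm d)\<^sup>2"
    unfolding power2_norm_eq_inner
    by (simp add: inner_diff_left inner_diff_right inner_commute algebra_simps power2_eq_square)
  also have "\<dots> \<le> (norm e)\<^sup>2 - 2 * \<rho> * (\<beta> * (norm e)\<^sup>2) + \<rho>\<^sup>2 * (M * norm e)\<^sup>2"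
  proof -
    have "2 * \<rho> * (\<beta> * (norm e)\<^sup>2) \<le> 2 * \<rho> * inner d e"
      using mono \<open>\<rho> \<ge> 0\<close> by (intro mult_left_mono) simp_all
    moreover have "\<rho>\<^sup>2 * (norm d)\<^sup>2 \<le> \<rho>\<^sup>2 * (M * norm e)\<^sup>2"
      using bound by (intro mult_left_mono power_mono) simp_all
    ultimately show ?thesis by linarith
  qed
  also have "\<dots> = (1 - (\<beta> / M)\<^sup>2) * (norm e)\<^sup>2"
    using assms by (simp add: \<rho>_def field_simps power2_eq_square)
  finally have "norm (e - \<rho> *\<^sub>R d) \<le> sqrt ((1 - (\<beta> / M)\<^sup>2) * (norm e)\<^sup>2)"
    by (rule real_le_rsqrt)
  then show ?thesis
    unfolding \<rho>_def by (simp add: real_sqrt_mult)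
qed

lemma riesz_gradient_step_contraction:
  fixes c :: "'v::real_inner \<Rightarrow> 'v \<Rightarrow> real"
  assumes c: "bounded_bilinear c" and A: "\<And>u y. inner (A u) y = c u y"
    and bound: "\<And>x y. norm (c x y) \<le> norm x * norm y * M"
    and coercive: "0 < \<beta>" "\<And>u. \<beta> * (norm u)\<^sup>2 \<le> c u u" and "\<beta> \<le> M"
  shows "norm ((u1 - (\<beta> / M\<^sup>2) *\<^sub>R A u1) - (u2 - (\<beta> / M\<^sup>2) *\<^sub>R A u2))
           \<le> sqrt (1 - (\<beta> / M)\<^sup>2) * norm (u1 - u2)"
proof -
  interpret c: bounded_bilinear c by (rule c)
  define e where "e = u1 - u2"
  define d where "d = A u1 - A u2"
  have d: "inner d y = c e y" for y
    unfolding d_def e_def by (simp add: inner_diff_left A c.diff_left)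
  have "norm d * norm d \<le> (M * norm e) * norm d"
    using d[of d] bound[of e d] by (simp add: power2_norm_eq_inner[symmetric] power2_eq_square algebra_simps)
  then have "norm d \<le> M * norm e"
    using assms(4,6) by (cases "d = 0") (auto simp: mult_le_cancel_right)
  moreover have "\<beta> * (norm e)\<^sup>2 \<le> inner d e"
    using d[of e] coercive(2)[of e] by simp
  ultimately have step: "norm (e - (\<beta> / M\<^sup>2) *\<^sub>R d) \<le> sqrt (1 - (\<beta> / M)\<^sup>2) * norm e"
    using norm_diff_scaled_le coercive(1) \<open>\<beta> \<le> M\<close> by blast
  have "(u1 - (\<beta> / M\<^sup>2) *\<^sub>R A u1) - (u2 - (\<beta> / M\<^sup>2) *\<^sub>R A u2) = e - (\<beta> / M\<^sup>2) *\<^sub>R d"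
    unfolding e_def d_def by (simp add: algebra_simps)
  with step show ?thesis
    unfolding e_def by metis
qed

lemma bounded_bilinear_bound_ge:
  assumes "bounded_bilinear c"
  shows "\<exists>M\<ge>\<beta>. \<forall>x y. norm (c x y) \<le> norm x * norm y * M"
proof -
  obtain M0 where M0: "\<And>x y. norm (c x y) \<le> norm x * norm y * M0"
    using bounded_bilinear.bounded[OF assms] by blast
  have "norm (c x y) \<le> norm x * norm y * max M0 \<beta>" for x y
    using M0[of x y] mult_left_mono[OF max.cobounded1[of M0 \<beta>], of "norm x * norm y"] by simp
  then show ?thesis
    by (intro exI[of _ "max M0 \<beta>"]) simp
qed

lemma lions_stampacchia:
  fixes r :: "'v::{real_inner,complete_space} \<Rightarrow> real" and c :: "'v \<Rightarrow> 'v \<Rightarrow> real"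
  assumes conv: "convex_on D r" and nonempty: "D \<noteq> {}"
    and closed: "\<And>c. closed {v\<in>D. r v \<le> c}"
    and minorant: "\<And>v. v \<in> D \<Longrightarrow> r v \<ge> - K * (norm v + 1)"
    and c: "bounded_bilinear c" and coercive: "\<beta> > 0" "\<And>u. c u u \<ge> \<beta> * (norm u)\<^sup>2"
    and L: "bounded_linear L"
  shows "\<exists>u\<in>D. \<forall>v\<in>D. c u (v - u) - L (v - u) + r v - r u \<ge> 0"
proof -
  interpret c: bounded_bilinear c by (rule c)
  obtain M where M: "\<beta> \<le> M" "\<And>x y. norm (c x y) \<le> norm x * norm y * M"
    using bounded_bilinear_bound_ge[OF c] by blast
  define \<rho> where "\<rho> = \<beta> / M\<^sup>2"
  define k where "k = sqrt (1 - (\<beta> / M)\<^sup>2)"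
  have "\<rho> > 0" "0 \<le> k" "k < 1"
    using coercive(1) M(1) by (auto simp: \<rho>_def k_def divide_le_eq_1 power_le_one)
  obtain A where A: "\<And>u y. inner (A u) y = c u y"
    using riesz_representation[OF c.bounded_linear_right] by metis
  obtain l where l: "\<And>y. inner l y = L y"
    using riesz_representation[OF L] by blast
  obtain P where PD: "\<And>p. P p \<in> D"
    and P: "\<And>p v. v \<in> D \<Longrightarrow> inner (P p - p) (v - P p) + \<rho> * (r v - r (P p)) \<ge> 0"
    using exists_prox_point[OF conv nonempty closed minorant \<open>\<rho> > 0\<close>] by metis
  define T where "T u = P (u - \<rho> *\<^sub>R (A u - l))" for u
  have "dist (T u1) (T u2) \<le> k * dist u1 u2" for u1 u2
  proof -
    have "dist (T u1) (T u2) \<le> norm ((u1 - \<rho> *\<^sub>R (A u1 - l)) - (u2 - \<rho> *\<^sub>R (A u2 - l)))"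
      unfolding T_def dist_norm by (rule prox_nonexpansive[OF PD P])
    also have "\<dots> = norm ((u1 - \<rho> *\<^sub>R A u1) - (u2 - \<rho> *\<^sub>R A u2))"
      by (simp add: algebra_simps)
    also have "\<dots> \<le> k * dist u1 u2"
      unfolding \<rho>_def k_def dist_norm
      by (rule riesz_gradient_step_contraction[OF c A M(2) coercive(1) _ M(1)]) (simp add: coercive(2))
    finally show ?thesis .
  qed
  then obtain u where u: "T u = u"
    using banach_fix_type[OF \<open>0 \<le> k\<close> \<open>k < 1\<close>] by blast
  show ?thesis
  proof (intro bexI ballI)
    show "u \<in> D"
      using PD u unfolding T_def by metis
    fix v assume "v \<in> D"
    have "inner (u - (u - \<rho> *\<^sub>R (A u - l))) (v - u) + \<rho> * (r v - r u) \<ge> 0"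
      using P[OF \<open>v \<in> D\<close>, of "u - \<rho> *\<^sub>R (A u - l)"] u unfolding T_def by simp
    then have "\<rho> * (c u (v - u) - L (v - u) + r v - r u) \<ge> 0"
      by (simp add: inner_diff_left A l c.diff_right linear_diff[OF bounded_linear.linear[OF L]] algebra_simps)
    then show "c u (v - u) - L (v - u) + r v - r u \<ge> 0"
      using \<open>\<rho> > 0\<close> by (simp add: zero_le_mult_iff)
  qed
qed

lemma convex_on_finite_part:
  assumes convex: "convex_ereal_fun \<phi>" and not_minf: "\<And>v. \<phi> v \<noteq> -\<infinity>"
  shows "convex_on {v. \<phi> v < \<infinity>} (\<lambda>v. real_of_ereal (\<phi> v))"
proof -
  have fin: "\<phi> v = ereal (real_of_ereal (\<phi> v))" if "\<phi> v < \<infinity>" for v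
    using that not_minf[of v] by (cases "\<phi> v") auto
  have step: "\<phi> ((1 - t) *\<^sub>R x + t *\<^sub>R y) \<le> ereal ((1 - t) * real_of_ereal (\<phi> x) + t * real_of_ereal (\<phi> y))"
    if "\<phi> x < \<infinity>" "\<phi> y < \<infinity>" "0 < t" "t < 1" for x y t
  proof -
    have "\<phi> ((1 - t) *\<^sub>R x + t *\<^sub>R y) \<le> ereal (1 - t) * \<phi> x + ereal t * \<phi> y"
      using convex that(3,4) unfolding convex_ereal_fun_def by blast
    also have "\<dots> = ereal ((1 - t) * real_of_ereal (\<phi> x) + t * real_of_ereal (\<phi> y))"
      using fin[OF that(1)] fin[OF that(2)] by (metis plus_ereal.simps(1) times_ereal.simps(1))
    finally show ?thesis .
  qed
  have "convex {v. \<phi> v < \<infinity>}"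
    unfolding convex_alt
  proof (intro ballI allI impI)
    fix x y and t :: real
    assume "x \<in> {v. \<phi> v < \<infinity>}" "y \<in> {v. \<phi> v < \<infinity>}" "0 \<le> t \<and> t \<le> 1"
    then show "(1 - t) *\<^sub>R x + t *\<^sub>R y \<in> {v. \<phi> v < \<infinity>}"
      using step[of x y t] by (cases "t = 0 \<or> t = 1") (auto simp: le_less_trans)
  qed
  then show ?thesis
  proof (intro convex_onI)
    fix t :: real and x y
    assume "0 < t" "t < 1" "x \<in> {v. \<phi> v < \<infinity>}" "y \<in> {v. \<phi> v < \<infinity>}"
    then show "real_of_ereal (\<phi> ((1 - t) *\<^sub>R x + t *\<^sub>R y))
        \<le> (1 - t) * real_of_ereal (\<phi> x) + t * real_of_ereal (\<phi> y)"
      using step[of x y t] not_minf[of "(1 - t) *\<^sub>R x + t *\<^sub>R y"]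
      by (cases "\<phi> ((1 - t) *\<^sub>R x + t *\<^sub>R y)") auto
  qed
qed

lemma closed_sublevels_finite_part:
  assumes lsc: "lsc_fun \<phi>" and not_minf: "\<And>v. \<phi> v \<noteq> -\<infinity>"
  shows "closed {v \<in> {v. \<phi> v < \<infinity>}. real_of_ereal (\<phi> v) \<le> c}"
proof -
  have "{v \<in> {v. \<phi> v < \<infinity>}. real_of_ereal (\<phi> v) \<le> c} = {v. \<phi> v \<le> ereal c}"
  proof (intro set_eqI iffI)
    fix v
    show "v \<in> {v \<in> {v. \<phi> v < \<infinity>}. real_of_ereal (\<phi> v) \<le> c} \<Longrightarrow> v \<in> {v. \<phi> v \<le> ereal c}"
      "v \<in> {v. \<phi> v \<le> ereal c} \<Longrightarrow> v \<in> {v \<in> {v. \<phi> v < \<infinity>}. real_of_ereal (\<phi> v) \<le> c}"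
      using not_minf[of v] by (cases "\<phi> v"; simp)+
  qed
  then show ?thesis
    using lsc unfolding lsc_fun_def by simp
qed

lemma lions_stampacchia_ereal:
  fixes \<phi> :: "'v::{real_inner,complete_space} \<Rightarrow> ereal" and c :: "'v \<Rightarrow> 'v \<Rightarrow> real"
  assumes convex: "convex_ereal_fun \<phi>" and proper: "proper_fun \<phi>" and lsc: "lsc_fun \<phi>"
    and minorant: "\<And>v. \<phi> v \<ge> ereal (- K * (norm v + 1))"
    and c: "bounded_bilinear c" and coercive: "\<beta> > 0" "\<And>u. c u u \<ge> \<beta> * (norm u)\<^sup>2"
    and L: "bounded_linear L"
  shows "\<exists>u. \<phi> u < \<infinity> \<and> (\<forall>v. ereal (L (v - u)) + \<phi> u \<le> ereal (c u (v - u)) + \<phi> v)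
           \<and> u \<in> dom_subdiff \<phi>"
proof -
  define D where "D = {v. \<phi> v < \<infinity>}"
  define r where "r v = real_of_ereal (\<phi> v)" for v
  have not_minf: "\<phi> v \<noteq> -\<infinity>" for v
    using proper by (simp add: proper_fun_def)
  have fin: "\<phi> v = ereal (r v)" if "v \<in> D" for v
    using that not_minf[of v] unfolding D_def r_def by (cases "\<phi> v") auto
  have "D \<noteq> {}"
    using proper by (auto simp: proper_fun_def D_def)
  moreover have "r v \<ge> - K * (norm v + 1)" if "v \<in> D" for v
    using minorant[of v] fin[OF that] by simp
  ultimately obtain u where "u \<in> D" and u: "\<And>v. v \<in> D \<Longrightarrow> c u (v - u) - L (v - u) + r v - r u \<ge> 0"
    using lions_stampacchia[OF convex_on_finite_part[OF convex not_minf]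
        _ closed_sublevels_finite_part[OF lsc not_minf] _ c coercive L]
    unfolding D_def r_def by blast
  have VI: "ereal (L (v - u)) + \<phi> u \<le> ereal (c u (v - u)) + \<phi> v" for v
    using u[of v] fin[OF \<open>u \<in> D\<close>] fin[of v] by (cases "v \<in> D") (auto simp: D_def)
  have "ereal (L (v - u) - c u (v - u)) + \<phi> u \<le> \<phi> v" for v
    using VI[of v] fin[OF \<open>u \<in> D\<close>] not_minf[of v] by (cases "\<phi> v") auto
  then have "(\<lambda>z. L z - c u z) \<in> subdiff \<phi> u"
    unfolding subdiff_def using \<open>u \<in> D\<close> bounded_linear_sub[OF L bounded_bilinear.bounded_linear_right[OF c]]
    by (simp add: D_def)
  then show ?thesis
    using \<open>u \<in> D\<close> VI unfolding D_def dom_subdiff_def by blast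
qed

lemma bounded_bilinear_add:
  assumes "bounded_bilinear f" "bounded_bilinear g"
  shows "bounded_bilinear (\<lambda>x y. f x y + g x y)"
proof -
  interpret f: bounded_bilinear f by fact
  interpret g: bounded_bilinear g by fact
  obtain Kf Kg where Kf: "\<And>x y. norm (f x y) \<le> norm x * norm y * Kf"
    and Kg: "\<And>x y. norm (g x y) \<le> norm x * norm y * Kg"
    using f.bounded g.bounded by metis
  show ?thesis
  proof
    have "norm (f x y + g x y) \<le> norm x * norm y * (Kf + Kg)" for x y
      using norm_triangle_ineq[of "f x y" "g x y"] Kf[of x y] Kg[of x y]
      by (simp add: distrib_left)
    then show "\<exists>K. \<forall>x y. norm (f x y + g x y) \<le> norm x * norm y * K" by blast
  qed (simp_all add: f.add_left f.add_right g.add_left g.add_right f.scaleR_left f.scaleR_right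
      g.scaleR_left g.scaleR_right algebra_simps)
qed

lemma bounded_bilinearI_linear:
  fixes h :: "'a::real_normed_vector \<Rightarrow> 'b::real_normed_vector \<Rightarrow> real"
  assumes "\<And>y. linear (\<lambda>x. h x y)" "\<And>x. linear (\<lambda>y. h x y)"
    and "\<And>x y. \<bar>h x y\<bar> \<le> K * norm x * norm y"
  shows "bounded_bilinear h"
proof
  have "norm (h x y) \<le> norm x * norm y * K" for x y
    using assms(3)[of x y] by (simp add: algebra_simps)
  then show "\<exists>K. \<forall>x y. norm (h x y) \<le> norm x * norm y * K" by blast
qed (simp_all add: linear_add[OF assms(1)] linear_add[OF assms(2)]
    linear_scale[OF assms(1)] linear_scale[OF assms(2)])

lemma sqrt_form_le_norm:
  assumes "bounded_bilinear a"
  shows "\<exists>K\<ge>0. \<forall>u. sqrt (a u u) \<le> K * norm u"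
proof -
  interpret bounded_bilinear a by fact
  obtain K where K: "\<And>x y. norm (a x y) \<le> norm x * norm y * K" "K > 0"
    using pos_bounded by blast
  have "sqrt (a u u) \<le> sqrt K * norm u" for u
  proof -
    have "a u u \<le> K * (norm u)\<^sup>2"
      using K(1)[of u u] by (simp add: power2_eq_square algebra_simps)
    then have "sqrt (a u u) \<le> sqrt (K * (norm u)\<^sup>2)" by simp
    then show ?thesis by (simp add: real_sqrt_mult)
  qed
  then show ?thesis
    using K(2) by (intro exI[of _ "sqrt K"]) simp
qed

lemma bounded_bilinear_scaled_inner_comp:
  assumes "bounded_linear emb"
  shows "bounded_bilinear (\<lambda>u z. lam * inner (emb u) (emb z))"
proof -
  have "bounded_bilinear (\<lambda>u z. inner (lam *\<^sub>R emb u) (emb z))"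
    using bounded_bilinear.comp[OF bounded_bilinear_inner] assms
      bounded_linear_compose[OF bounded_linear_scaleR_right assms] by blast
  then show ?thesis by simp
qed

lemma bounded_bilinear_trilinear_slice:
  fixes b :: "'v::real_normed_vector \<Rightarrow> 'v \<Rightarrow> 'v \<Rightarrow> real"
  assumes lin2: "\<And>u w. linear (\<lambda>v. b u v w)" and lin3: "\<And>u v. linear (\<lambda>w. b u v w)"
    and bound: "\<And>u v w. \<bar>b u v w\<bar> \<le> C * N u * N v * N w"
    and N: "\<And>v. 0 \<le> N v" and K: "K \<ge> 0" "\<And>v. N v \<le> K * norm v"
  shows "bounded_bilinear (b u)"
proof (rule bounded_bilinearI_linear[OF lin2 lin3])
  fix x y
  have "\<bar>b u x y\<bar> \<le> \<bar>C\<bar> * N u * N x * N y"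
    using bound[of u x y] mult_right_mono[OF abs_ge_self[of C], of "N u * N x * N y"] N
    by (simp add: mult.assoc)
  also have "\<dots> \<le> \<bar>C\<bar> * N u * (K * norm x) * (K * norm y)"
    using N K by (intro mult_mono mult_nonneg_nonneg) auto
  finally show "\<bar>b u x y\<bar> \<le> (\<bar>C\<bar> * N u * K * K) * norm x * norm y"
    by (simp add: algebra_simps)
qed

lemma ereal_affine_minorant_dominated_norm:
  assumes minorant: "\<And>v. \<phi> v \<ge> ereal (- C * (N v + 1))"
    and "C \<ge> 0" "K \<ge> 0" and N: "\<And>v. N v \<le> K * norm v"
  shows "\<phi> v \<ge> ereal (- (C * (K + 1)) * (norm v + 1))"
proof -
  have "C * (N v + 1) \<le> C * ((K + 1) * (norm v + 1))"
    using assms by (intro mult_left_mono) (auto simp: algebra_simps intro: order_trans[OF N])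
  then have "ereal (- (C * (K + 1)) * (norm v + 1)) \<le> ereal (- C * (N v + 1))"
    by (simp add: mult.assoc)
  then show ?thesis
    using minorant by (rule order_trans)
qed

theorem mainTheorem3:
  fixes emb :: "'v::{real_inner,complete_space} \<Rightarrow> 'h::{real_inner,complete_space}"
    and a :: "'v \<Rightarrow> 'v \<Rightarrow> real"
    and b :: "'v \<Rightarrow> 'v \<Rightarrow> 'v \<Rightarrow> real"
    and \<phi> :: "'v \<Rightarrow> ereal"
    and normV :: "'v \<Rightarrow> real"
    and \<alpha> C_B C_\<phi>1 C \<beta>1 \<theta>1 :: real
    and C\<theta> :: "real \<Rightarrow> real"
    and w :: 'v and f :: 'h and lam :: real
  assumes emb_lin: "bounded_linear emb"
    and emb_inj: "inj emb"
    and emb_dense: "closure (range emb) = UNIV"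
    and emb_compact: "\<And>S. bounded S \<Longrightarrow> compact (closure (emb ` S))"
    and a_bil: "bounded_bilinear a"
    and a_coercive: "\<alpha> > 0" "\<And>u. a u u \<ge> \<alpha> * (norm u)\<^sup>2"
    and normV_def: "\<And>u. normV u = sqrt (a u u)"
    and b_lin1: "\<And>v w. linear (\<lambda>u. b u v w)"
    and b_lin2: "\<And>u w. linear (\<lambda>v. b u v w)"
    and b_lin3: "\<And>u v. linear (\<lambda>w. b u v w)"
    and b_bound: "\<And>u v w. \<bar>b u v w\<bar> \<le> C_B * normV u * normV v * normV w"
    and \<phi>_convex: "convex_ereal_fun \<phi>"
    and \<phi>_proper: "proper_fun \<phi>"
    and \<phi>_lsc: "lsc_fun \<phi>"
    and \<phi>_lower: "C_\<phi>1 > 0" "\<And>v. \<phi> v \<ge> ereal (- C_\<phi>1 * (normV v + 1))"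
    and H1: "C > 0" "0 < \<beta>1" "\<beta>1 \<le> 1"
      "\<And>u v. \<bar>b u v v\<bar> \<le> C * normV u * normV v * norm (emb v) powr \<beta>1 * normV v powr (1 - \<beta>1)"
    and \<theta>1_def: "\<theta>1 = 2 / \<beta>1"
    and Young: "\<And>\<epsilon>. \<epsilon> > 0 \<Longrightarrow> C\<theta> \<epsilon> > 0"
      "\<And>\<epsilon> u v. \<epsilon> > 0 \<Longrightarrow>
         \<bar>b u v v\<bar> \<le> C\<theta> \<epsilon> * normV u powr \<theta>1 * (norm (emb v))\<^sup>2 + \<epsilon> * (normV v)\<^sup>2"
    and H2: "\<And>u vs v ws w. weak_conv vs v \<Longrightarrow> weak_conv ws w \<Longrightarrow>
               (\<lambda>j. b u (vs j) (ws j)) \<longlonglongrightarrow> b u v w"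
    and lam_ge: "lam \<ge> C\<theta> (1/4) * normV w powr \<theta>1"
  shows "\<exists>u. \<phi> u < \<infinity> \<and>
           (\<forall>v. ereal (lam * inner (emb u) (emb (v - u)) + a u (v - u) + b w u (v - u)) + \<phi> v
                 \<ge> ereal (inner f (emb (v - u))) + \<phi> u)
           \<and> u \<in> dom_subdiff \<phi>"
proof -
  have a_nonneg: "a u u \<ge> 0" for u
    using a_coercive(1) a_coercive(2)[of u] by (meson mult_nonneg_nonneg order.trans zero_le_power2 less_imp_le)
  obtain KV where KV: "KV \<ge> 0" "\<And>u. normV u \<le> KV * norm u"
    using sqrt_form_le_norm[OF a_bil] normV_def by metis
  define c where "c u z = lam * inner (emb u) (emb z) + a u z + b w u z" for u z
  have c_bilinear: "bounded_bilinear c"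
    unfolding c_def using a_nonneg
    by (intro bounded_bilinear_add bounded_bilinear_scaled_inner_comp emb_lin a_bil
        bounded_bilinear_trilinear_slice[OF b_lin2 b_lin3 b_bound _ KV]) (simp add: normV_def)
  have c_coercive: "c u u \<ge> 3/4 * \<alpha> * (norm u)\<^sup>2" for u
  proof -
    have "\<bar>b w u u\<bar> \<le> C\<theta> (1/4) * normV w powr \<theta>1 * (norm (emb u))\<^sup>2 + 1/4 * a u u"
      using Young(2)[of "1/4" w u] a_nonneg[of u] by (simp add: normV_def)
    moreover have "C\<theta> (1/4) * normV w powr \<theta>1 * (norm (emb u))\<^sup>2 \<le> lam * (norm (emb u))\<^sup>2"
      using lam_ge by (rule mult_right_mono) simp
    ultimately show ?thesis
      using a_coercive(2)[of u] unfolding c_def power2_norm_eq_inner by linarith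
  qed
  have "3/4 * \<alpha> > 0"
    using a_coercive(1) by simp
  from lions_stampacchia_ereal[OF \<phi>_convex \<phi>_proper \<phi>_lsc
      ereal_affine_minorant_dominated_norm[OF \<phi>_lower(2) _ KV] c_bilinear this c_coercive
      bounded_linear_compose[OF bounded_linear_inner_right emb_lin]]
  show ?thesis
    using \<phi>_lower(1) unfolding c_def by simp
qed

end
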